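(* Let $D=(V,E;s,t)$, $N$ be as in the context with $\sigma_N\ge2$. In the sequential linear programs for the nucleon of $\widetilde\Gamma_D$, one has $\epsilon_1=0$ and $\widetilde X_1=\mathcal{C}(\widetilde\Gamma_D)$.
   Context: $D=(V,E;s,t)$ is a directed network with unit arc capacities (parallel arcs allowed); $N\subseteq E$ is the set of private arcs (players), $M=E\setminus N$ public arcs; every $s$-$t$ path contains an arc of $N$ and every arc lies on some $s$-$t$ path. $\sigma_N$ is the maximum number of $s$-$t$ paths pairwise sharing no arc of $N$. For $S\subseteq N$, $\gamma(S)$ is the maximum number of pairwise arc-disjoint $s$-$t$ paths in $D_S=(V,S\cup M;s,t)$. Auxiliary game $\widetilde\Gamma_D=(N,\tilde\gamma)$: $\tilde\gamma(N)=\sigma_N$, $\tilde\gamma(S)=\gamma(S)$ for $S\subsetneq N$; $\chi(\widetilde\Gamma_D)=\{x\in\mathbb{R}^N_{\ge0}:x(N)=\sigma_N\}$, $x(S)=\sum_{i\in S}x_i$; core $\mathcal{C}(\widetilde\Gamma_D)=\{x\in\chi(\widetilde\Gamma_D):x(S)\ge\tilde\gamma(S)\ \forall S\}$. For $X\subseteq\mathbb{R}^N$, $\mathrm{fix}(X)=\{S\subseteq N: x(S) \text{ is the same for all } x\in X\}$. Sequential LPs: $\widetilde X_0=\chi(\widetilde\Gamma_D)$, $\mathrm{fix}(\widetilde X_0)=\{\emptyset,N\}$, $\epsilon_0=0$; for $k\ge0$, $\widetilde{LP}_{k+1}$ maximizes $\epsilon$ subject to $x(S)\ge(1+\epsilon)\tilde\gamma(S)$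 for all $S\in 2^N\setminus\mathrm{fix}(\widetilde X_k)$ and $x\in\widetilde X_k$; $\epsilon_{k+1}$ is its optimal value and $\widetilde X_{k+1}$ is the set of $x$ such that $(x,\epsilon_{k+1})$ is optimal. *)

theory Defs
  imports Main "HOL.Real"
begin

text \<open>A directed multigraph is given by an arc set E (of arbitrary type 'e, so parallel
arcs are allowed) together with tail and head maps.\<close>

definition st_path :: "('e \<Rightarrow> 'v) \<Rightarrow> ('e \<Rightarrow> 'v) \<Rightarrow> 'v \<Rightarrow> 'v \<Rightarrow> 'e set \<Rightarrow> 'e list \<Rightarrow> bool" where
  "st_path tail head s t A p \<longleftrightarrow>
     p \<noteq> [] \<and> set p \<subseteq> A \<and> tail (p ! 0) = s \<and> head (last p) = t \<and>
     (\<forall>i. Suc i < length p \<longrightarrow> head (p ! i) = tail (p ! Suc i)) \<and>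
     distinct (s # map head p)"

definition gamma_val :: "('e \<Rightarrow> 'v) \<Rightarrow> ('e \<Rightarrow> 'v) \<Rightarrow> 'v \<Rightarrow> 'v \<Rightarrow> 'e set \<Rightarrow> 'e set \<Rightarrow> 'e set \<Rightarrow> nat" where
  "gamma_val tail head s t E N S = Max {card P | P.
      (\<forall>p\<in>P. st_path tail head s t (S \<union> (E - N)) p) \<and>
      (\<forall>p\<in>P. \<forall>q\<in>P. p \<noteq> q \<longrightarrow> set p \<inter> set q = {})}"

definition sigma_val :: "('e \<Rightarrow> 'v) \<Rightarrow> ('e \<Rightarrow> 'v) \<Rightarrow> 'v \<Rightarrow> 'v \<Rightarrow> 'e set \<Rightarrow> 'e set \<Rightarrow> nat" where
  "sigma_val tail head s t E N = Max {card P | P.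
      (\<forall>p\<in>P. st_path tail head s t E p) \<and>
      (\<forall>p\<in>P. \<forall>q\<in>P. p \<noteq> q \<longrightarrow> set p \<inter> set q \<inter> N = {})}"

definition gamma_tilde :: "('e \<Rightarrow> 'v) \<Rightarrow> ('e \<Rightarrow> 'v) \<Rightarrow> 'v \<Rightarrow> 'v \<Rightarrow> 'e set \<Rightarrow> 'e set \<Rightarrow> 'e set \<Rightarrow> real" where
  "gamma_tilde tail head s t E N S =
     (if S = N then real (sigma_val tail head s t E N) else real (gamma_val tail head s t E N S))"

text \<open>Vectors in R^N are represented as functions 'e \<Rightarrow> real vanishing outside N.\<close>
definition imputations :: "('e \<Rightarrow> 'v) \<Rightarrow> ('e \<Rightarrow> 'v) \<Rightarrow> 'v \<Rightarrow> 'v \<Rightarrow> 'e set \<Rightarrow> 'e set \<Rightarrow> ('e \<Rightarrow> real) set" where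
  "imputations tail head s t E N = {x. (\<forall>i. i \<notin> N \<longrightarrow> x i = 0) \<and> (\<forall>i\<in>N. x i \<ge> 0) \<and>
      sum x N = real (sigma_val tail head s t E N)}"

definition core_tilde :: "('e \<Rightarrow> 'v) \<Rightarrow> ('e \<Rightarrow> 'v) \<Rightarrow> 'v \<Rightarrow> 'v \<Rightarrow> 'e set \<Rightarrow> 'e set \<Rightarrow> ('e \<Rightarrow> real) set" where
  "core_tilde tail head s t E N = {x \<in> imputations tail head s t E N.
      \<forall>S. S \<subseteq> N \<longrightarrow> sum x S \<ge> gamma_tilde tail head s t E N S}"

definition fixset :: "'e set \<Rightarrow> ('e \<Rightarrow> real) set \<Rightarrow> 'e set set" where
  "fixset N X = {S. S \<subseteq> N \<and> (\<forall>x\<in>X. \<forall>y\<in>X. sum x S = sum y S)}"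

definition lp_feasible :: "'e set \<Rightarrow> ('e set \<Rightarrow> real) \<Rightarrow> ('e \<Rightarrow> real) set \<Rightarrow> real \<Rightarrow> ('e \<Rightarrow> real) \<Rightarrow> bool" where
  "lp_feasible N v X e x \<longleftrightarrow> x \<in> X \<and>
     (\<forall>S. S \<subseteq> N \<and> S \<notin> fixset N X \<longrightarrow> sum x S \<ge> (1 + e) * v S)"

definition lp_opt_value :: "'e set \<Rightarrow> ('e set \<Rightarrow> real) \<Rightarrow> ('e \<Rightarrow> real) set \<Rightarrow> real" where
  "lp_opt_value N v X = (GREATEST e. \<exists>x. lp_feasible N v X e x)"

definition lp_opt_set :: "'e set \<Rightarrow> ('e set \<Rightarrow> real) \<Rightarrow> ('e \<Rightarrow> real) set \<Rightarrow> ('e \<Rightarrow> real) set" where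
  "lp_opt_set N v X = {x. lp_feasible N v X (lp_opt_value N v X) x}"

end

theory Submission
  imports Defs
begin

text \<open>
  The imputations form a simplex of positive mass \<open>\<sigma>\<^sub>N\<close>, on which only \<open>\<emptyset>\<close> and
  \<open>N\<close> have constant worth; so \<open>\<epsilon> = 0\<close> is feasible exactly for the core. The core is
  nonempty: by Menger's theorem (proved with integral augmenting flows in which public arcs are
  uncapacitated) some set \<open>C\<close> of \<open>\<sigma>\<^sub>N\<close> private arcs meets every \<open>s\<close>-\<open>t\<close> path,
  and its indicator vector pays \<open>|C \<inter> S| \<ge> \<gamma>(S)\<close> to \<open>S\<close>, because arc-disjoint paths of
  \<open>D\<^sub>S\<close> meet \<open>C \<inter> S\<close> in distinct arcs. No \<open>\<epsilon> > 0\<close> is feasible: a maximum family of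
  \<open>\<sigma>\<^sub>N \<ge> 2\<close> paths sharing no private arc yields \<open>\<sigma>\<^sub>N\<close> disjoint, nonempty, proper
  coalitions \<open>A\<^sub>p = p \<inter> N\<close> with \<open>\<gamma>(A\<^sub>p) \<ge> 1\<close>, whence
  \<open>(1 + \<epsilon>) \<sigma>\<^sub>N \<le> x(N) = \<sigma>\<^sub>N\<close>.
\<close>

lemma card_le_card_hitting_set:
  fixes P :: "'a list set"
  assumes "finite C" and "\<forall>p\<in>P. set p \<inter> C \<noteq> {}"
    and "\<forall>p\<in>P. \<forall>q\<in>P. p \<noteq> q \<longrightarrow> set p \<inter> set q \<inter> C = {}"
  shows "finite P \<and> card P \<le> card (C \<inter> \<Union>(set ` P))"
proof -
  define h where "h p = (SOME e. e \<in> set p \<inter> C)" for p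
  have h: "h p \<in> set p \<inter> C" if "p \<in> P" for p
    unfolding h_def by (rule someI_ex) (use assms(2) that in blast)
  have inj: "inj_on h P"
  proof (rule inj_onI)
    fix p q
    assume "p \<in> P" "q \<in> P" "h p = h q"
    then have "h p \<in> set p \<inter> set q \<inter> C"
      using h by force
    then show "p = q"
      using assms(3) \<open>p \<in> P\<close> \<open>q \<in> P\<close> by blast
  qed
  have image: "h ` P \<subseteq> C \<inter> \<Union>(set ` P)"
    using h by blast
  show ?thesis
    using card_inj_on_le[OF inj image] finite_imageD[OF finite_subset[OF image] inj] assms(1)
    by simp
qed

lemma finite_card_family: "\<forall>P. Q P \<longrightarrow> card P \<le> b \<Longrightarrow> finite {card P |P. Q P}"
  by (rule finite_subset[of _ "{..b}"]) auto

lemma card_le_Max_card_family: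
  assumes "\<forall>P. Q P \<longrightarrow> card P \<le> b" and "Q P"
  shows "card P \<le> Max {card P |P. Q P}"
  using assms(2) by (intro Max_ge[OF finite_card_family[OF assms(1)]]) blast

lemma Max_card_family_attained:
  assumes "\<forall>P. Q P \<longrightarrow> card P \<le> b" and "Q P0"
  obtains P where "Q P" and "card P = Max {card P |P. Q P}"
proof -
  have "{card P |P. Q P} \<noteq> {}"
    using assms(2) by blast
  then have "Max {card P |P. Q P} \<in> {card P |P. Q P}"
    by (rule Max_in[OF finite_card_family[OF assms(1)]])
  then show thesis
    using that by (smt (verit) mem_Collect_eq)
qed

lemma Max_card_family_le:
  assumes "Q P0" and "\<forall>P. Q P \<longrightarrow> card P \<le> k"
  shows "Max {card P |P. Q P} \<le> k"
  using assms by (intro Max.boundedI[OF finite_card_family[OF assms(2)]]) blast+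

section \<open>Sequential linear programs\<close>

lemma fixset_simplex:
  fixes N :: "'e set"
  assumes "finite N" and "0 < c"
  defines "X \<equiv> {x. (\<forall>i. i \<notin> N \<longrightarrow> x i = 0) \<and> (\<forall>i\<in>N. 0 \<le> x i) \<and> sum x N = c}"
  shows "fixset N X = {{}, N}"
proof -
  define vertex :: "'e \<Rightarrow> 'e \<Rightarrow> real" where "vertex k i = (if i = k then c else 0)" for k i
  have vertex: "vertex k \<in> X" if "k \<in> N" for k
    using that assms by (auto simp: X_def vertex_def)
  have "S = {} \<or> S = N" if S: "S \<in> fixset N X" for S
  proof (rule ccontr)
    assume "\<not> (S = {} \<or> S = N)"
    then obtain i j where "i \<in> S" "j \<in> N" "j \<notin> S"
      using S unfolding fixset_def by blast
    moreover have "sum (vertex i) S = sum (vertex j) S"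
      using S vertex \<open>i \<in> S\<close> \<open>j \<in> N\<close> unfolding fixset_def by blast
    moreover have "finite S"
      using S assms(1) finite_subset unfolding fixset_def by blast
    ultimately show False
      using assms(2) by (simp add: vertex_def)
  qed
  moreover have "{} \<in> fixset N X" and "N \<in> fixset N X"
    unfolding fixset_def X_def by simp_all
  ultimately show ?thesis
    by blast
qed

lemma lp_feasible_0_iff:
  assumes "\<forall>S\<in>fixset N X. \<forall>x\<in>X. v S \<le> sum x S"
  shows "lp_feasible N v X 0 x \<longleftrightarrow> x \<in> X \<and> (\<forall>S\<subseteq>N. v S \<le> sum x S)"
proof
  assume "lp_feasible N v X 0 x"
  then have x: "x \<in> X" "\<forall>S. S \<subseteq> N \<and> S \<notin> fixset N X \<longrightarrow> v S \<le> sum x S"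
    unfolding lp_feasible_def by simp_all
  have "v S \<le> sum x S" if "S \<subseteq> N" for S
  proof (cases "S \<in> fixset N X")
    case True
    then show ?thesis
      using assms x(1) by blast
  next
    case False
    then show ?thesis
      using x(2) that by blast
  qed
  then show "x \<in> X \<and> (\<forall>S\<subseteq>N. v S \<le> sum x S)"
    using x(1) by blast
qed (simp add: lp_feasible_def)

lemma lp_feasible_nonpos_if_packing:
  fixes A :: "'i \<Rightarrow> 'e set"
  assumes feasible: "lp_feasible N v X e x"
    and "finite N" and "finite I" and "I \<noteq> {}"
    and X: "\<forall>y\<in>X. (\<forall>i\<in>N. 0 \<le> y i) \<and> sum y N = real (card I)"
    and A: "\<forall>i\<in>I. A i \<subseteq> N \<and> A i \<notin> fixset N X \<and> 1 \<le> v (A i)"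
    and disjoint: "\<forall>i\<in>I. \<forall>j\<in>I. i \<noteq> j \<longrightarrow> A i \<inter> A j = {}"
  shows "e \<le> 0"
proof (rule ccontr)
  assume "\<not> e \<le> 0"
  have x: "x \<in> X" "\<forall>S. S \<subseteq> N \<and> S \<notin> fixset N X \<longrightarrow> (1 + e) * v S \<le> sum x S"
    using feasible unfolding lp_feasible_def by auto
  have "1 + e \<le> sum x (A i)" if "i \<in> I" for i
  proof -
    have Ai: "A i \<subseteq> N" "A i \<notin> fixset N X" "1 \<le> v (A i)"
      using A that by auto
    have "(1 + e) * 1 \<le> (1 + e) * v (A i)"
      using Ai(3) \<open>\<not> e \<le> 0\<close> by (intro mult_left_mono) auto
    also have "\<dots> \<le> sum x (A i)"
      using x(2) Ai(1,2) by blast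
    finally show ?thesis
      by simp
  qed
  then have "real (card I) * (1 + e) \<le> (\<Sum>i\<in>I. sum x (A i))"
    using sum_mono[of I "\<lambda>_. 1 + e"] by simp
  also have "\<dots> = sum x (\<Union>(A ` I))"
  proof (rule sum.UNION_disjoint[symmetric])
    show "\<forall>i\<in>I. finite (A i)"
      using A \<open>finite N\<close> finite_subset by blast
  qed fact+
  also have "\<dots> \<le> sum x N"
    using \<open>finite N\<close> A X x(1) by (intro sum_mono2) auto
  also have "\<dots> = real (card I)"
    using X x(1) by simp
  finally have "real (card I) * e \<le> 0"
    by (simp add: distrib_left)
  moreover have "0 < real (card I) * e"
    using \<open>\<not> e \<le> 0\<close> \<open>finite I\<close> \<open>I \<noteq> {}\<close> by (simp add: card_gt_0_iff)
  ultimately show False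
    by simp
qed

lemma lp_opt_value_eqI:
  assumes "lp_feasible N v X e x" and "\<forall>e' x'. lp_feasible N v X e' x' \<longrightarrow> e' \<le> e"
  shows "lp_opt_value N v X = e"
  unfolding lp_opt_value_def using assms by (intro Greatest_equality) blast+

section \<open>Integral flows\<close>

text \<open>Walks may use arcs backwards: the signed arc \<open>(e, True)\<close> traverses \<open>e\<close> from tail to head,
  \<open>(e, False)\<close> from head to tail.\<close>
definition orient :: "bool \<Rightarrow> int" where
  "orient b = (if b then 1 else -1)"

fun walk_flow :: "('e \<times> bool) list \<Rightarrow> 'e \<Rightarrow> int" where
  "walk_flow [] e = 0"
| "walk_flow ((a, b) # w) e = (if a = e then orient b else 0) + walk_flow w e"

lemma walk_flow_notin: "a \<notin> fst ` set w \<Longrightarrow> walk_flow w a = 0"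
  by (induction w) auto

abbreviation forward :: "'e list \<Rightarrow> ('e \<times> bool) list" where
  "forward p \<equiv> map (\<lambda>e. (e, True)) p"

text \<open>Private arcs have unit capacity, public arcs unbounded capacity: then minimum cuts
  consist of private arcs, and integral flows decompose into paths sharing no private arc.\<close>
locale st_network =
  fixes tail head :: "'e \<Rightarrow> 'v" and s t :: 'v and E N :: "'e set"
  assumes finite_E: "finite E" and s_ne_t: "s \<noteq> t" and N_subset_E: "N \<subseteq> E"
    and paths_hit_N: "\<forall>p. st_path tail head s t E p \<longrightarrow> set p \<inter> N \<noteq> {}"
begin

lemma finite_N: "finite N"
  using finite_E N_subset_E by (rule rev_finite_subset)

fun stail :: "'e \<times> bool \<Rightarrow> 'v" where
  "stail (e, b) = (if b then tail e else head e)"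

fun shead :: "'e \<times> bool \<Rightarrow> 'v" where
  "shead (e, b) = (if b then head e else tail e)"

fun walk :: "'v \<Rightarrow> ('e \<times> bool) list \<Rightarrow> 'v \<Rightarrow> bool" where
  "walk u [] v \<longleftrightarrow> u = v"
| "walk u (x # w) v \<longleftrightarrow> stail x = u \<and> walk (shead x) w v"

definition simple_walk :: "'v \<Rightarrow> ('e \<times> bool) list \<Rightarrow> 'v \<Rightarrow> bool" where
  "simple_walk u w v \<longleftrightarrow> walk u w v \<and> distinct (u # map shead w)"

lemma walk_append: "walk u (w1 @ w2) v \<longleftrightarrow> (\<exists>m. walk u w1 m \<and> walk m w2 v)"
  by (induction w1 arbitrary: u) auto

lemma walk_vertices:
  "walk u w v \<Longrightarrow> x \<in> set w \<Longrightarrow> stail x \<in> set (u # map shead w) \<and> shead x \<in> set (map shead w)"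
  by (induction w arbitrary: u) auto

lemma walk_end: "walk u w v \<Longrightarrow> v = u \<or> v \<in> shead ` set w"
  by (induction w arbitrary: u) auto

lemma walk_leaves:
  "walk u w v \<Longrightarrow> u \<in> X \<Longrightarrow> v \<notin> X \<Longrightarrow> \<exists>x\<in>set w. stail x \<in> X \<and> shead x \<notin> X"
  by (induction w arbitrary: u) auto

lemma simple_walk_Cons: "simple_walk u (x # w) v \<Longrightarrow> simple_walk (shead x) w v"
  by (simp add: simple_walk_def)

lemma simple_walk_arc_once:
  assumes "simple_walk u ((a, b) # w) v"
  shows "a \<notin> fst ` set w"
proof
  assume "a \<in> fst ` set w"
  then obtain b' where "(a, b') \<in> set w"
    by force
  moreover have "walk (shead (a, b)) w v"
    using assms unfolding simple_walk_def by simp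
  ultimately have "stail (a, b') \<in> set (map shead ((a, b) # w))"
    and "shead (a, b') \<in> set (map shead ((a, b) # w))"
    using walk_vertices[of "shead (a, b)" w v "(a, b')"] by auto
  moreover have "u = stail (a, b)"
    using assms unfolding simple_walk_def by simp
  ultimately have "u \<in> set (map shead ((a, b) # w))"
    by (cases b; cases b') auto
  with assms show False
    unfolding simple_walk_def by simp
qed

lemma walk_flow_simple:
  "simple_walk u w v \<Longrightarrow> (a, b) \<in> set w \<Longrightarrow> walk_flow w a = orient b"
proof (induction w arbitrary: u)
  case (Cons x w)
  obtain a' b' where x: "x = (a', b')"
    by force
  have once: "a' \<notin> fst ` set w"
    using simple_walk_arc_once Cons.prems(1) x by blast
  show ?case
  proof (cases "a = a'")
    case True
    with Cons.prems(2) once x have "b = b'"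
      by force
    with True once x show ?thesis
      by (simp add: walk_flow_notin)
  next
    case False
    with Cons.prems x show ?thesis
      using Cons.IH[OF simple_walk_Cons[OF Cons.prems(1)]] by simp
  qed
qed simp

lemma walk_flow_forward:
  "simple_walk u (forward p) v \<Longrightarrow> walk_flow (forward p) e = of_bool (e \<in> set p)"
  using walk_flow_simple[of u "forward p" v e True] walk_flow_notin[of e "forward p"]
  by (cases "e \<in> set p") (auto simp: orient_def image_image)

lemma exists_simple_walk: "walk u w v \<Longrightarrow> \<exists>w'. simple_walk u w' v \<and> set w' \<subseteq> set w"
proof (induction w arbitrary: u)
  case Nil
  then show ?case
    by (auto simp: simple_walk_def)
next
  case (Cons x w)
  then obtain w' where w': "simple_walk (shead x) w' v" "set w' \<subseteq> set w"
    by auto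
  show ?case
  proof (cases "u \<in> set (shead x # map shead w')")
    case True
    txt \<open>Cut out the cycle through \<open>u\<close>.\<close>
    then obtain w2 where "simple_walk u w2 v" "set w2 \<subseteq> set w'"
    proof (cases "u = shead x")
      case False
      with True obtain y where "y \<in> set w'" "shead y = u"
        by auto
      moreover from this(1) obtain w1 w2 where "w' = w1 @ y # w2"
        by (meson split_list)
      ultimately show thesis
        using w'(1) that[of w2] by (auto simp: simple_walk_def walk_append)
    qed (use w'(1) that in auto)
    then show ?thesis
      using w'(2) by auto
  next
    case False
    then show ?thesis
      using w' Cons.prems by (intro exI[of _ "x # w'"]) (auto simp: simple_walk_def)
  qed
qed

definition excess :: "('e \<Rightarrow> int) \<Rightarrow> 'v \<Rightarrow> int" where
  "excess g v = (\<Sum>e\<in>{e\<in>E. head e = v}. g e) - (\<Sum>e\<in>{e\<in>E. tail e = v}. g e)"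

lemma sum_excess:
  assumes "finite X"
  shows "(\<Sum>v\<in>X. excess g v) = (\<Sum>e\<in>E. g e * (of_bool (head e \<in> X) - of_bool (tail e \<in> X)))"
proof -
  have "(\<Sum>v\<in>X. \<Sum>e\<in>{e\<in>E. h e = v}. g e) = (\<Sum>e\<in>E. g e * of_bool (h e \<in> X))"
    for h :: "'e \<Rightarrow> 'v"
  proof -
    have "(\<Sum>v\<in>X. \<Sum>e\<in>{e\<in>E. h e = v}. g e) = (\<Sum>e\<in>E. \<Sum>v\<in>X. if h e = v then g e else 0)"
      using finite_E by (simp add: sum.inter_filter sum.swap[of _ X])
    also have "\<dots> = (\<Sum>e\<in>E. g e * of_bool (h e \<in> X))"
      using assms by (intro sum.cong refl) (simp add: sum.delta)
    finally show ?thesis .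
  qed
  then show ?thesis
    unfolding excess_def by (simp add: sum_subtractf right_diff_distrib)
qed

lemma excess_add: "excess (\<lambda>e. f e + c * g e) v = excess f v + c * excess g v"
  unfolding excess_def by (simp add: sum.distrib sum_distrib_left right_diff_distrib)

lemma excess_walk_flow:
  "walk u w v \<Longrightarrow> \<forall>x\<in>set w. fst x \<in> E \<Longrightarrow> excess (walk_flow w) y = of_bool (y = v) - of_bool (y = u)"
proof (induction w arbitrary: u)
  case Nil
  then show ?case
    by (simp add: excess_def)
next
  case (Cons x w)
  obtain a b where x: "x = (a, b)"
    by force
  have "walk_flow (x # w) = (\<lambda>e. (if a = e then orient b else 0) + 1 * walk_flow w e)"
    using x by (simp add: fun_eq_iff)
  then have "excess (walk_flow (x # w)) y
      = excess (\<lambda>e. if a = e then orient b else 0) y + excess (walk_flow w) y"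
    using excess_add[of "\<lambda>e. if a = e then orient b else 0" 1 "walk_flow w" y] by simp
  also have "\<dots> = orient b * (of_bool (head a = y) - of_bool (tail a = y))
      + (of_bool (y = v) - of_bool (y = shead x))"
    using finite_E Cons x unfolding excess_def by (simp add: right_diff_distrib)
  also have "\<dots> = of_bool (y = v) - of_bool (y = u)"
    using Cons.prems x by (cases b) (auto simp: orient_def)
  finally show ?case .
qed

definition flow :: "('e \<Rightarrow> int) \<Rightarrow> bool" where
  "flow f \<longleftrightarrow> (\<forall>e. 0 \<le> f e) \<and> (\<forall>e\<in>N. f e \<le> 1) \<and> (\<forall>v. v \<noteq> s \<longrightarrow> v \<noteq> t \<longrightarrow> excess f v = 0)"

definition flow_value :: "('e \<Rightarrow> int) \<Rightarrow> int" where
  "flow_value f = - excess f s"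

lemma zero_flow: "flow (\<lambda>_. 0)" "flow_value (\<lambda>_. 0) = 0"
  unfolding flow_def flow_value_def excess_def by simp_all

lemma flow_value_eq_cut_sum:
  assumes "flow f" and "finite R" and "s \<in> R" and "t \<notin> R"
  shows "flow_value f = (\<Sum>e\<in>E. f e * (of_bool (tail e \<in> R) - of_bool (head e \<in> R)))"
proof -
  have "(\<Sum>v\<in>R - {s}. excess f v) = 0"
    using assms unfolding flow_def by (intro sum.neutral) auto
  then have "(\<Sum>v\<in>R. excess f v) = excess f s"
    using assms(2,3) by (simp add: sum.remove)
  then show ?thesis
    unfolding flow_value_def sum_excess[OF assms(2)]
    by (simp add: sum_subtractf right_diff_distrib)
qed

definition augmentable :: "('e \<Rightarrow> int) \<Rightarrow> int \<Rightarrow> 'e \<times> bool \<Rightarrow> bool" where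
  "augmentable f c x \<longleftrightarrow> 0 \<le> f (fst x) + c * orient (snd x)
     \<and> (fst x \<in> N \<longrightarrow> f (fst x) + c * orient (snd x) \<le> 1)"

lemma augment_capacity:
  assumes "simple_walk u w v" and "\<forall>x\<in>set w. augmentable f c x"
    and "\<forall>e. 0 \<le> f e" and "\<forall>e\<in>N. f e \<le> 1"
  shows "0 \<le> f e + c * walk_flow w e \<and> (e \<in> N \<longrightarrow> f e + c * walk_flow w e \<le> 1)"
  using assms(1,2)
proof (induction w arbitrary: u)
  case Nil
  then show ?case
    using assms(3,4) by simp
next
  case (Cons x w)
  obtain a b where x: "x = (a, b)"
    by force
  have "a \<notin> fst ` set w"
    using simple_walk_arc_once Cons.prems(1) x by blast
  moreover have "0 \<le> f e + c * walk_flow w e \<and> (e \<in> N \<longrightarrow> f e + c * walk_flow w e \<le> 1)"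
    using Cons.IH[OF simple_walk_Cons[OF Cons.prems(1)]] Cons.prems(2) by simp
  ultimately show ?case
    using Cons.prems(2) x by (cases "a = e") (auto simp: augmentable_def walk_flow_notin)
qed

lemma augment_flow:
  assumes "flow f" and "simple_walk s w t" and "\<forall>x\<in>set w. fst x \<in> E \<and> augmentable f c x"
  shows "flow (\<lambda>e. f e + c * walk_flow w e)"
    and "flow_value (\<lambda>e. f e + c * walk_flow w e) = flow_value f + c"
proof -
  have "walk s w t"
    using assms(2) by (simp add: simple_walk_def)
  then have "excess (\<lambda>e. f e + c * walk_flow w e) y
      = excess f y + c * (of_bool (y = t) - of_bool (y = s))" for y
    using excess_add excess_walk_flow assms(3) by simp
  then show "flow (\<lambda>e. f e + c * walk_flow w e)"
    and "flow_value (\<lambda>e. f e + c * walk_flow w e) = flow_value f + c"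
    using augment_capacity[OF assms(2)] assms(1,3) s_ne_t
    unfolding flow_def flow_value_def by auto
qed

lemma walk_forward_iff:
  "p \<noteq> [] \<Longrightarrow> walk u (forward p) v \<longleftrightarrow> tail (p ! 0) = u \<and> head (last p) = v
     \<and> (\<forall>i. Suc i < length p \<longrightarrow> head (p ! i) = tail (p ! Suc i))"
proof (induction p arbitrary: u)
  case (Cons a p)
  show ?case
  proof (cases "p = []")
    case False
    then have "(\<forall>i. Suc i < length (a # p) \<longrightarrow> head ((a # p) ! i) = tail ((a # p) ! Suc i))
        \<longleftrightarrow> head a = tail (p ! 0) \<and> (\<forall>i. Suc i < length p \<longrightarrow> head (p ! i) = tail (p ! Suc i))"
      by (auto simp: nth_Cons split: nat.split)
    then show ?thesis
      using Cons.IH[OF False, of "head a"] False by auto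
  qed simp
qed simp

lemma st_path_iff_simple_walk:
  "st_path tail head s t A p \<longleftrightarrow> p \<noteq> [] \<and> set p \<subseteq> A \<and> simple_walk s (forward p) t"
  unfolding st_path_def simple_walk_def using walk_forward_iff by (auto simp: comp_def)

lemma st_path_of_forward_walk:
  assumes "simple_walk s w t" and "\<forall>x\<in>set w. fst x \<in> E \<and> snd x"
  shows "st_path tail head s t E (map fst w)"
proof -
  have "w = forward (map fst w)"
    using assms(2) by (induction w) auto
  moreover have "w \<noteq> []"
    using assms(1) s_ne_t by (auto simp: simple_walk_def)
  ultimately show ?thesis
    using assms unfolding st_path_iff_simple_walk by auto
qed

definition reachable :: "('e \<times> bool \<Rightarrow> bool) \<Rightarrow> 'v set" where
  "reachable P = {v. \<exists>w. walk s w v \<and> (\<forall>x\<in>set w. P x)}"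

lemma source_reachable: "s \<in> reachable P"
  unfolding reachable_def by (auto intro: exI[of _ "[]"])

lemma reachable_step:
  assumes "stail x \<in> reachable P" and "P x"
  shows "shead x \<in> reachable P"
proof -
  obtain w where "walk s w (stail x)" "\<forall>y\<in>set w. P y"
    using assms(1) unfolding reachable_def by auto
  then show ?thesis
    using assms(2) unfolding reachable_def by (auto intro!: exI[of _ "w @ [x]"] simp: walk_append)
qed

lemma finite_reachable:
  assumes "\<forall>x. P x \<longrightarrow> fst x \<in> E"
  shows "finite (reachable P)"
proof -
  have "reachable P \<subseteq> insert s (tail ` E \<union> head ` E)"
  proof
    fix v
    assume "v \<in> reachable P"
    then obtain w where w: "walk s w v" "\<forall>x\<in>set w. P x"
      unfolding reachable_def by auto
    from walk_end[OF w(1)] show "v \<in> insert s (tail ` E \<union> head ` E)"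
    proof
      assume "v \<in> shead ` set w"
      then obtain a b where "(a, b) \<in> set w" "v = shead (a, b)"
        by auto
      then show ?thesis
        using w(2) assms by (auto split: if_splits)
    qed simp
  qed
  then show ?thesis
    using finite_E finite_subset by blast
qed

lemma reachable_simple_walk:
  "v \<in> reachable P \<Longrightarrow> \<exists>w. simple_walk s w v \<and> (\<forall>x\<in>set w. P x)"
  unfolding reachable_def using exists_simple_walk by blast

definition residual :: "('e \<Rightarrow> int) \<Rightarrow> 'e \<times> bool \<Rightarrow> bool" where
  "residual f x \<longleftrightarrow> fst x \<in> E \<and> augmentable f 1 x"

lemma residual_boundary:
  assumes "flow f" and "e \<in> E"
  shows "tail e \<in> reachable (residual f) \<Longrightarrow> head e \<notin> reachable (residual f) \<Longrightarrow> e \<in> N \<and> f e = 1"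
    and "head e \<in> reachable (residual f) \<Longrightarrow> tail e \<notin> reachable (residual f) \<Longrightarrow> f e = 0"
proof -
  have f: "0 \<le> f e" "e \<in> N \<Longrightarrow> f e \<le> 1"
    using assms(1) unfolding flow_def by auto
  show "e \<in> N \<and> f e = 1" if "tail e \<in> reachable (residual f)" "head e \<notin> reachable (residual f)"
    using reachable_step[of "(e, True)"] that f assms(2)
    by (fastforce simp: residual_def augmentable_def orient_def)
  show "f e = 0" if "head e \<in> reachable (residual f)" "tail e \<notin> reachable (residual f)"
    using reachable_step[of "(e, False)"] that f assms(2)
    by (fastforce simp: residual_def augmentable_def orient_def)
qed

lemma residual_cut:
  assumes f: "flow f" and "t \<notin> reachable (residual f)"
  shows "\<exists>C\<subseteq>N. (\<forall>p. st_path tail head s t E p \<longrightarrow> set p \<inter> C \<noteq> {}) \<and> int (card C) = flow_value f"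
proof -
  define R where "R = reachable (residual f)"
  define C where "C = {e \<in> E. tail e \<in> R \<and> head e \<notin> R}"
  have R: "finite R" "s \<in> R" "t \<notin> R"
    using assms finite_reachable[of "residual f"] source_reachable
    unfolding R_def residual_def by auto
  have "flow_value f = (\<Sum>e\<in>E. f e * (of_bool (tail e \<in> R) - of_bool (head e \<in> R)))"
    by (rule flow_value_eq_cut_sum[OF f R])
  also have "\<dots> = (\<Sum>e\<in>E. of_bool (e \<in> C))"
    using residual_boundary[OF f] unfolding C_def R_def by (intro sum.cong) auto
  also have "\<dots> = int (card C)"
    using finite_E by (simp add: C_def Int_def)
  finally have "int (card C) = flow_value f" ..
  moreover have "C \<subseteq> N"
    using residual_boundary(1)[OF f] unfolding C_def R_def by blast
  moreover have "set p \<inter> C \<noteq> {}" if "st_path tail head s t E p" for p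
  proof -
    have "walk s (forward p) t" "set p \<subseteq> E"
      using that unfolding st_path_iff_simple_walk simple_walk_def by auto
    then show ?thesis
      using walk_leaves[of s "forward p" t R] R(2,3) unfolding C_def by auto
  qed
  ultimately show ?thesis
    by blast
qed

lemma augment_or_cut:
  assumes "flow f"
  shows "(\<exists>g. flow g \<and> flow_value g = flow_value f + 1)
    \<or> (\<exists>C\<subseteq>N. (\<forall>p. st_path tail head s t E p \<longrightarrow> set p \<inter> C \<noteq> {}) \<and> int (card C) = flow_value f)"
proof (cases "t \<in> reachable (residual f)")
  case True
  then obtain w where "simple_walk s w t" "\<forall>x\<in>set w. residual f x"
    using reachable_simple_walk by blast
  then show ?thesis
    using augment_flow[OF assms, of w 1] unfolding residual_def by blast
next
  case False
  then show ?thesis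
    using residual_cut[OF assms] by blast
qed

lemma positive_flow_path:
  assumes f: "flow f" and "0 < flow_value f"
  obtains p where "st_path tail head s t E p" and "\<forall>e\<in>set p. 1 \<le> f e"
proof -
  define Q where "Q x \<longleftrightarrow> fst x \<in> E \<and> snd x \<and> 1 \<le> f (fst x)" for x
  define R where "R = reachable Q"
  have "t \<in> R"
  proof (rule ccontr)
    assume "t \<notin> R"
    have R: "finite R" "s \<in> R"
      using finite_reachable[of Q] source_reachable unfolding R_def Q_def by auto
    have f0: "0 \<le> f e" for e
      using f unfolding flow_def by auto
    have "f e = 0" if "e \<in> E" "tail e \<in> R" "head e \<notin> R" for e
      using reachable_step[of "(e, True)" Q] that f0[of e] unfolding R_def Q_def by fastforce
    then have "(\<Sum>e\<in>E. f e * (of_bool (tail e \<in> R) - of_bool (head e \<in> R))) \<le> 0"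
      using f0 by (intro sum_nonpos) auto
    then show False
      using flow_value_eq_cut_sum[OF f R \<open>t \<notin> R\<close>] assms(2) by simp
  qed
  then obtain w where "simple_walk s w t" "\<forall>x\<in>set w. Q x"
    using reachable_simple_walk unfolding R_def by blast
  then show thesis
    using that[of "map fst w"] st_path_of_forward_walk[of w] unfolding Q_def by auto
qed

lemma flow_minus_path:
  assumes f: "flow f" and p: "st_path tail head s t E p" and "\<forall>e\<in>set p. 1 \<le> f e"
  shows "flow (\<lambda>e. f e - of_bool (e \<in> set p))"
    and "flow_value (\<lambda>e. f e - of_bool (e \<in> set p)) = flow_value f - 1"
proof -
  have w: "simple_walk s (forward p) t" "set p \<subseteq> E"
    using p unfolding st_path_iff_simple_walk by auto
  have "\<forall>x\<in>set (forward p). fst x \<in> E \<and> augmentable f (-1) x"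
    using f assms(3) w(2) unfolding flow_def augmentable_def orient_def by auto
  moreover have "(\<lambda>e. f e + -1 * walk_flow (forward p) e) = (\<lambda>e. f e - of_bool (e \<in> set p))"
    using walk_flow_forward[OF w(1)] by simp
  ultimately show "flow (\<lambda>e. f e - of_bool (e \<in> set p))"
    and "flow_value (\<lambda>e. f e - of_bool (e \<in> set p)) = flow_value f - 1"
    using augment_flow[OF f w(1), of "-1"] by simp_all
qed

section \<open>Packings of \<open>s\<close>-\<open>t\<close> paths and Menger's theorem\<close>

definition private_disjoint_paths :: "'e list set \<Rightarrow> bool" where
  "private_disjoint_paths P \<longleftrightarrow> (\<forall>p\<in>P. st_path tail head s t E p)
     \<and> (\<forall>p\<in>P. \<forall>q\<in>P. p \<noteq> q \<longrightarrow> set p \<inter> set q \<inter> N = {})"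

lemma private_disjoint_paths_card_le:
  assumes "private_disjoint_paths P"
  shows "finite P \<and> card P \<le> card N"
proof -
  have "finite P \<and> card P \<le> card (N \<inter> \<Union>(set ` P))"
    using assms paths_hit_N finite_N unfolding private_disjoint_paths_def
    by (intro card_le_card_hitting_set) auto
  then show ?thesis
    using card_mono[OF finite_N, of "N \<inter> \<Union>(set ` P)"] by auto
qed

lemma flow_decomposition:
  assumes "flow f" and "flow_value f = int k"
  shows "\<exists>P. private_disjoint_paths P \<and> card P = k \<and> (\<forall>p\<in>P. \<forall>e\<in>set p \<inter> N. 1 \<le> f e)"
  using assms
proof (induction k arbitrary: f)
  case 0
  then show ?case
    by (intro exI[of _ "{}"]) (simp add: private_disjoint_paths_def)
next
  case (Suc k)
  obtain p where p: "st_path tail head s t E p" "\<forall>e\<in>set p. 1 \<le> f e"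
    using positive_flow_path[OF Suc.prems(1)] Suc.prems(2) by auto
  define g where "g e = f e - of_bool (e \<in> set p)" for e
  have "flow g" "flow_value g = int k"
    using flow_minus_path[OF Suc.prems(1) p] Suc.prems(2) unfolding g_def by simp_all
  then obtain P where P: "private_disjoint_paths P" "card P = k" "\<forall>q\<in>P. \<forall>e\<in>set q \<inter> N. 1 \<le> g e"
    using Suc.IH by blast
  txt \<open>Since \<open>f \<le> 1\<close> on private arcs, \<open>g\<close> vanishes on the private arcs of \<open>p\<close>.\<close>
  have "g e \<le> 0" if "e \<in> set p" "e \<in> N" for e
    using Suc.prems(1) that unfolding flow_def g_def by auto
  then have avoid: "set q \<inter> set p \<inter> N = {}" if "q \<in> P" for q
    using P(3) that by force
  have "p \<notin> P"
    using avoid paths_hit_N p(1) by blast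
  moreover have "finite P"
    using private_disjoint_paths_card_le[OF P(1)] by blast
  moreover have "private_disjoint_paths (insert p P)"
    using P(1) p(1) avoid unfolding private_disjoint_paths_def by blast
  moreover have "\<forall>q\<in>insert p P. \<forall>e\<in>set q \<inter> N. 1 \<le> f e"
    using p(2) P(3) unfolding g_def by force
  ultimately show ?case
    using P(2) by (intro exI[of _ "insert p P"]) simp
qed

lemma min_private_cut:
  obtains C where "C \<subseteq> N" and "\<forall>p. st_path tail head s t E p \<longrightarrow> set p \<inter> C \<noteq> {}"
    and "\<exists>P. private_disjoint_paths P \<and> card P = card C"
proof -
  have bounded: "nat (flow_value f) < Suc (card N)" if "flow f \<and> 0 \<le> flow_value f" for f
    using flow_decomposition[of f "nat (flow_value f)"] private_disjoint_paths_card_le that by force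
  have "\<exists>f. (flow f \<and> 0 \<le> flow_value f)
      \<and> (\<forall>g. flow g \<and> 0 \<le> flow_value g \<longrightarrow> nat (flow_value g) \<le> nat (flow_value f))"
    by (rule Lattices_Big.ex_has_greatest_nat[where b = "Suc (card N)"])
      (use zero_flow bounded in auto)
  then obtain f where f: "flow f" "0 \<le> flow_value f"
    and max: "\<forall>g. flow g \<and> 0 \<le> flow_value g \<longrightarrow> nat (flow_value g) \<le> nat (flow_value f)"
    by blast
  have "\<not> (flow g \<and> flow_value g = flow_value f + 1)" for g
  proof
    assume "flow g \<and> flow_value g = flow_value f + 1"
    with max f(2) have "nat (flow_value f + 1) \<le> nat (flow_value f)"
      by auto
    with f(2) show False
      by simp
  qed
  then obtain C where C: "C \<subseteq> N" "\<forall>p. st_path tail head s t E p \<longrightarrow> set p \<inter> C \<noteq> {}"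
    "int (card C) = flow_value f"
    using augment_or_cut[OF f(1)] by blast
  moreover obtain P where "private_disjoint_paths P" "card P = card C"
    using flow_decomposition[OF f(1) C(3)[symmetric]] by blast
  ultimately show thesis
    using that by blast
qed

lemma sigma_val_eq: "sigma_val tail head s t E N = Max {card P |P. private_disjoint_paths P}"
  unfolding sigma_val_def private_disjoint_paths_def ..

lemma card_le_sigma_val: "private_disjoint_paths P \<Longrightarrow> card P \<le> sigma_val tail head s t E N"
  unfolding sigma_val_eq using private_disjoint_paths_card_le
  by (intro card_le_Max_card_family) blast+

lemma sigma_val_attained:
  obtains P where "private_disjoint_paths P" and "card P = sigma_val tail head s t E N"
proof -
  have "\<forall>P. private_disjoint_paths P \<longrightarrow> card P \<le> card N"
    using private_disjoint_paths_card_le by blast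
  moreover have "private_disjoint_paths {}"
    by (simp add: private_disjoint_paths_def)
  ultimately show thesis
    using Max_card_family_attained that unfolding sigma_val_eq by blast
qed

lemma sigma_val_le_cut:
  assumes "C \<subseteq> N" and "\<forall>p. st_path tail head s t E p \<longrightarrow> set p \<inter> C \<noteq> {}"
  shows "sigma_val tail head s t E N \<le> card C"
  unfolding sigma_val_eq
proof (rule Max_card_family_le[of _ "{}"])
  have "finite C"
    using assms(1) finite_N by (rule finite_subset)
  show "\<forall>P. private_disjoint_paths P \<longrightarrow> card P \<le> card C"
  proof (intro allI impI)
    fix P
    assume "private_disjoint_paths P"
    then have "card P \<le> card (C \<inter> \<Union>(set ` P))"
      using card_le_card_hitting_set[OF \<open>finite C\<close>, of P] assms
      unfolding private_disjoint_paths_def by blast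
    also have "\<dots> \<le> card C"
      using \<open>finite C\<close> by (intro card_mono) auto
    finally show "card P \<le> card C" .
  qed
qed (simp add: private_disjoint_paths_def)

lemma menger_private_cut:
  obtains C where "C \<subseteq> N" and "\<forall>p. st_path tail head s t E p \<longrightarrow> set p \<inter> C \<noteq> {}"
    and "card C = sigma_val tail head s t E N"
proof -
  obtain C P where "C \<subseteq> N" "\<forall>p. st_path tail head s t E p \<longrightarrow> set p \<inter> C \<noteq> {}"
    "private_disjoint_paths P" "card P = card C"
    using min_private_cut by metis
  then show thesis
    using that card_le_sigma_val sigma_val_le_cut by (metis le_antisym)
qed

definition disjoint_paths_in :: "'e set \<Rightarrow> 'e list set \<Rightarrow> bool" where
  "disjoint_paths_in S P \<longleftrightarrow> (\<forall>p\<in>P. st_path tail head s t (S \<union> (E - N)) p)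
     \<and> (\<forall>p\<in>P. \<forall>q\<in>P. p \<noteq> q \<longrightarrow> set p \<inter> set q = {})"

lemma gamma_val_eq: "gamma_val tail head s t E N S = Max {card P |P. disjoint_paths_in S P}"
  unfolding gamma_val_def disjoint_paths_in_def ..

lemma st_path_in_subgraph:
  "st_path tail head s t (S \<union> (E - N)) p \<Longrightarrow> S \<subseteq> N \<Longrightarrow> st_path tail head s t E p \<and> set p \<subseteq> S \<union> (E - N)"
  using N_subset_E unfolding st_path_def by blast

lemma gamma_val_le_cut:
  assumes "S \<subseteq> N" and "C \<subseteq> N" and "\<forall>p. st_path tail head s t E p \<longrightarrow> set p \<inter> C \<noteq> {}"
  shows "gamma_val tail head s t E N S \<le> card (C \<inter> S)"
  unfolding gamma_val_eq
proof (rule Max_card_family_le[of _ "{}"])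
  have "finite (C \<inter> S)"
    using finite_subset[OF assms(2) finite_N] by simp
  show "\<forall>P. disjoint_paths_in S P \<longrightarrow> card P \<le> card (C \<inter> S)"
  proof (intro allI impI)
    fix P
    assume P: "disjoint_paths_in S P"
    have "set p \<inter> (C \<inter> S) \<noteq> {}" if "p \<in> P" for p
    proof -
      have "st_path tail head s t E p" "set p \<subseteq> S \<union> (E - N)"
        using P that st_path_in_subgraph[OF _ assms(1)] unfolding disjoint_paths_in_def by auto
      then show ?thesis
        using assms(2,3) by blast
    qed
    then have "card P \<le> card (C \<inter> S \<inter> \<Union>(set ` P))"
      using card_le_card_hitting_set[OF \<open>finite (C \<inter> S)\<close>, of P] P
      unfolding disjoint_paths_in_def by blast
    also have "\<dots> \<le> card (C \<inter> S)"
      using \<open>finite (C \<inter> S)\<close> by (intro card_mono) auto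
    finally show "card P \<le> card (C \<inter> S)" .
  qed
qed (simp add: disjoint_paths_in_def)

lemma gamma_val_empty: "gamma_val tail head s t E N {} = 0"
proof -
  have "gamma_val tail head s t E N {} \<le> card (N \<inter> {})"
    by (rule gamma_val_le_cut) (use paths_hit_N in auto)
  then show ?thesis
    by simp
qed

lemma one_le_gamma_val:
  assumes "S \<subseteq> N" and "st_path tail head s t (S \<union> (E - N)) p"
  shows "1 \<le> gamma_val tail head s t E N S"
proof -
  have "private_disjoint_paths P" if "disjoint_paths_in S P" for P
    using that st_path_in_subgraph[OF _ assms(1)]
    unfolding disjoint_paths_in_def private_disjoint_paths_def by blast
  then have "\<forall>P. disjoint_paths_in S P \<longrightarrow> card P \<le> card N"
    using private_disjoint_paths_card_le by blast
  moreover have "disjoint_paths_in S {p}"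
    using assms(2) by (simp add: disjoint_paths_in_def)
  ultimately show ?thesis
    unfolding gamma_val_eq
    using card_le_Max_card_family[of "disjoint_paths_in S" "card N" "{p}"] by simp
qed

section \<open>The first linear program of the nucleon\<close>

lemma fixset_imputations:
  assumes "0 < sigma_val tail head s t E N"
  shows "fixset N (imputations tail head s t E N) = {{}, N}"
  unfolding imputations_def using fixset_simplex[OF finite_N] assms by simp

lemma lp_feasible_0_iff_core:
  assumes "0 < sigma_val tail head s t E N"
  shows "lp_feasible N (gamma_tilde tail head s t E N) (imputations tail head s t E N) 0 x
    \<longleftrightarrow> x \<in> core_tilde tail head s t E N"
proof -
  obtain P where "private_disjoint_paths P" "card P = sigma_val tail head s t E N"
    by (rule sigma_val_attained)
  then obtain p where "st_path tail head s t E p"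
    using assms unfolding private_disjoint_paths_def by (metis card.empty ex_in_conv less_irrefl)
  then have "N \<noteq> {}"
    using paths_hit_N by blast
  then have "gamma_tilde tail head s t E N {} = 0"
    unfolding gamma_tilde_def using gamma_val_empty by simp
  then have "\<forall>S\<in>fixset N (imputations tail head s t E N). \<forall>y\<in>imputations tail head s t E N.
      gamma_tilde tail head s t E N S \<le> sum y S"
    unfolding fixset_imputations[OF assms] by (simp add: imputations_def gamma_tilde_def)
  from lp_feasible_0_iff[OF this] show ?thesis
    unfolding core_tilde_def by simp
qed

lemma core_tilde_nonempty: "\<exists>x. x \<in> core_tilde tail head s t E N"
proof -
  obtain C where C: "C \<subseteq> N" "\<forall>p. st_path tail head s t E p \<longrightarrow> set p \<inter> C \<noteq> {}"
    "card C = sigma_val tail head s t E N"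
    by (rule menger_private_cut)
  define x :: "'e \<Rightarrow> real" where "x e = of_bool (e \<in> C)" for e
  have sum_x: "sum x S = real (card (C \<inter> S))" if "S \<subseteq> N" for S
    using finite_subset[OF that finite_N] unfolding x_def by (simp add: Int_def conj_commute)
  have "x \<in> imputations tail head s t E N"
    using C sum_x[of N] unfolding imputations_def x_def by (auto simp: Int_absorb2)
  moreover have "gamma_tilde tail head s t E N S \<le> sum x S" if "S \<subseteq> N" for S
    using sum_x[OF that] sum_x[of N] C gamma_val_le_cut[OF that C(1,2)]
    unfolding gamma_tilde_def by (auto simp: Int_absorb2)
  ultimately show ?thesis
    unfolding core_tilde_def by blast
qed

lemma lp_feasible_nonpos:
  assumes "2 \<le> sigma_val tail head s t E N"
    and "lp_feasible N (gamma_tilde tail head s t E N) (imputations tail head s t E N) e x"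
  shows "e \<le> 0"
proof -
  obtain P where P: "private_disjoint_paths P" "card P = sigma_val tail head s t E N"
    by (rule sigma_val_attained)
  have "finite P"
    using private_disjoint_paths_card_le[OF P(1)] by blast
  have proper: "set p \<inter> N \<noteq> {} \<and> set p \<inter> N \<noteq> N" if p: "p \<in> P" for p
  proof -
    have "card (P - {p}) \<noteq> 0"
      using card_Diff_singleton[OF p] assms(1) P(2) by simp
    then obtain q where "q \<in> P - {p}"
      by (metis all_not_in_conv card.empty)
    then show ?thesis
      using P(1) p paths_hit_N unfolding private_disjoint_paths_def by blast
  qed
  have worth: "1 \<le> gamma_tilde tail head s t E N (set p \<inter> N)" if "p \<in> P" for p
  proof -
    have "st_path tail head s t ((set p \<inter> N) \<union> (E - N)) p"
      using P(1) that unfolding private_disjoint_paths_def st_path_def by blast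
    then show ?thesis
      using one_le_gamma_val proper[OF that] unfolding gamma_tilde_def by auto
  qed
  have pos: "0 < sigma_val tail head s t E N"
    using assms(1) by simp
  show ?thesis
  proof (rule lp_feasible_nonpos_if_packing[where A = "\<lambda>p. set p \<inter> N",
        OF assms(2) finite_N \<open>finite P\<close>])
    show "P \<noteq> {}"
      using pos P(2) by auto
    show "\<forall>y\<in>imputations tail head s t E N. (\<forall>i\<in>N. 0 \<le> y i) \<and> sum y N = real (card P)"
      unfolding P(2) imputations_def by blast
    show "\<forall>p\<in>P. set p \<inter> N \<subseteq> N \<and> set p \<inter> N \<notin> fixset N (imputations tail head s t E N)
        \<and> 1 \<le> gamma_tilde tail head s t E N (set p \<inter> N)"
      unfolding fixset_imputations[OF pos] using proper worth by blast
    show "\<forall>p\<in>P. \<forall>q\<in>P. p \<noteq> q \<longrightarrow> set p \<inter> N \<inter> (set q \<inter> N) = {}"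
      using P(1) unfolding private_disjoint_paths_def by blast
  qed
qed

end

theorem lemma11:
  fixes V :: "'v set" and E N :: "'e set" and tail head :: "'e \<Rightarrow> 'v" and s t :: 'v
  assumes "finite V" and "finite E"
    and "\<forall>e\<in>E. tail e \<in> V \<and> head e \<in> V"
    and "s \<in> V" and "t \<in> V" and "s \<noteq> t"
    and "N \<subseteq> E"
    and "\<forall>p. st_path tail head s t E p \<longrightarrow> set p \<inter> N \<noteq> {}"
    and "\<forall>e\<in>E. \<exists>p. st_path tail head s t E p \<and> e \<in> set p"
    and "sigma_val tail head s t E N \<ge> 2"
  defines "v \<equiv> gamma_tilde tail head s t E N"
    and "X0 \<equiv> imputations tail head s t E N"
  shows "(\<exists>x. lp_feasible N v X0 0 x) \<and> (\<forall>e x. lp_feasible N v X0 e x \<longrightarrow> e \<le> 0)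
         \<and> lp_opt_value N v X0 = 0
         \<and> lp_opt_set N v X0 = core_tilde tail head s t E N"
proof -
  interpret st_network tail head s t E N
    using assms by unfold_locales auto
  have sigma_pos: "0 < sigma_val tail head s t E N"
    using assms(10) by simp
  have feasible_0_iff: "lp_feasible N v X0 0 x \<longleftrightarrow> x \<in> core_tilde tail head s t E N" for x
    unfolding v_def X0_def by (rule lp_feasible_0_iff_core[OF sigma_pos])
  obtain x where "lp_feasible N v X0 0 x"
    using core_tilde_nonempty feasible_0_iff by blast
  moreover have nonpos: "\<forall>e x. lp_feasible N v X0 e x \<longrightarrow> e \<le> 0"
    unfolding v_def X0_def using lp_feasible_nonpos[OF assms(10)] by blast
  ultimately have "lp_opt_value N v X0 = 0"
    by (rule lp_opt_value_eqI)
  then have "lp_opt_set N v X0 = core_tilde tail head s t E N"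
    unfolding lp_opt_set_def using feasible_0_iff by auto
  with \<open>lp_feasible N v X0 0 x\<close> nonpos \<open>lp_opt_value N v X0 = 0\<close> show ?thesis
    by blast
qed

end
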